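(* For all integers $s\ge2$ and $m\ge s+1$, the tight cycle $C_m^{(s)}$ is edge-balanced.
   Context: The tight cycle $C_m^{(s)}$ is the $s$-uniform hypergraph with vertices $v_1,\dots,v_m$ in cyclic order and the $m$ edges $\{v_i,v_{i+1},\dots,v_{i+s-1}\}$, $i=1,\dots,m$, indices modulo $m$. For an $s$-graph $F$ with $v_F$ vertices and $e_F\ge1$ edges, $g(F)=1/s$ if $e_F=1$ and $g(F)=\frac{e_F-1}{v_F-s}$ if $e_F>1$. $F$ is edge-balanced if every sub-hypergraph $F'\subseteq F$ with $e_{F'}>0$ satisfies $g(F')\le g(F)$. *)

theory Defs
  imports Complex_Main
begin

definition tight_cycle_vertices :: "nat \<Rightarrow> nat set" where
  "tight_cycle_vertices m = {..<m}"

definition tight_cycle_edges :: "nat \<Rightarrow> nat \<Rightarrow> nat set set" where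
  "tight_cycle_edges s m = {(\<lambda>j. (i + j) mod m) ` {..<s} | i. i < m}"

definition g_density :: "nat \<Rightarrow> 'a set \<Rightarrow> 'a set set \<Rightarrow> real" where
  "g_density s V E =
     (if card E = 1 then 1 / real s
      else (real (card E) - 1) / (real (card V) - real s))"

definition sub_hypergraph :: "'a set \<Rightarrow> 'a set set \<Rightarrow> 'a set \<Rightarrow> 'a set set \<Rightarrow> bool" where
  "sub_hypergraph V' E' V E \<longleftrightarrow> V' \<subseteq> V \<and> E' \<subseteq> E \<and> (\<forall>e\<in>E'. e \<subseteq> V')"

definition edge_balanced :: "nat \<Rightarrow> 'a set \<Rightarrow> 'a set set \<Rightarrow> bool" where
  "edge_balanced s V E \<longleftrightarrow>
     (\<forall>V' E'. sub_hypergraph V' E' V E \<and> card E' > 0 \<longrightarrow> g_density s V' E' \<le> g_density s V E)"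

end

theory Submission
  imports Defs "HOL-Number_Theory.Cong"
begin

text \<open>
  A sub-hypergraph using every vertex has at most as many edges as the whole cycle, so its
  density is at most that of the cycle. Otherwise some vertex x is missed, and rotating the
  cycle so that x becomes the last vertex turns every remaining edge into an interval of s
  consecutive integers inside the image W of the vertex set. Distinct intervals have distinct
  right endpoints, all lying in W, while the first s - 1 points of the leftmost interval lie
  in W below all of them; hence at most |W| - s + 1 edges remain and the density is at most 1.
  The cycle itself contains the m - s + 1 intervals starting at 0, ..., m - s, so its density
  is at least 1.
\<close>

lemma card_intervals_within_le:
  fixes W :: "nat set"
  assumes "finite W" "0 < s" "{a. {a..<a+s} \<subseteq> W} \<noteq> {}"
  shows "card {a. {a..<a+s} \<subseteq> W} + s \<le> card W + 1"
proof -
  define S where "S = {a. {a..<a+s} \<subseteq> W}"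
  have "S \<subseteq> W" using \<open>0 < s\<close> unfolding S_def by auto
  then have "finite S" using \<open>finite W\<close> finite_subset by blast
  define a\<^sub>0 where "a\<^sub>0 = Min S"
  have "a\<^sub>0 \<in> S" using Min_in \<open>finite S\<close> assms(3) unfolding a\<^sub>0_def S_def by blast
  have a\<^sub>0_le: "a\<^sub>0 \<le> a" if "a \<in> S" for a using \<open>finite S\<close> that unfolding a\<^sub>0_def by simp
  define L where "L = {a\<^sub>0..<a\<^sub>0 + s - 1}"
  define R where "R = (\<lambda>a. a + s - 1) ` S"
  have "L \<subseteq> {a\<^sub>0..<a\<^sub>0 + s}" unfolding L_def by auto
  then have "L \<subseteq> W" using \<open>a\<^sub>0 \<in> S\<close> unfolding S_def by blast
  moreover have "R \<subseteq> W" using \<open>0 < s\<close> unfolding R_def S_def by auto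
  moreover have "L \<inter> R = {}" using a\<^sub>0_le unfolding L_def R_def by fastforce
  ultimately have "card L + card R \<le> card W"
    using \<open>finite W\<close> card_mono[of W "L \<union> R"] card_Un_disjoint[of L R] finite_subset
    by (metis le_sup_iff)
  moreover have "card R = card S"
    unfolding R_def using \<open>0 < s\<close> by (intro card_image inj_onI) auto
  ultimately show ?thesis using \<open>0 < s\<close> unfolding L_def S_def by simp
qed

lemma inj_on_add_mod:
  fixes c m :: nat
  shows "inj_on (\<lambda>v. (v + c) mod m) {..<m}"
  by (rule inj_onI) (metis cong_def cong_add_rcancel_nat lessThan_iff mod_less)

definition cyclic_interval :: "nat \<Rightarrow> nat \<Rightarrow> nat \<Rightarrow> nat set" where
  "cyclic_interval m a s = (\<lambda>j. (a + j) mod m) ` {..<s}"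

lemma tight_cycle_edges_eq:
  "tight_cycle_edges s m = {cyclic_interval m i s | i. i < m}"
  unfolding tight_cycle_edges_def cyclic_interval_def ..

lemma image_add_mod_cyclic_interval:
  "(\<lambda>v. (v + c) mod m) ` cyclic_interval m i s = cyclic_interval m ((i + c) mod m) s"
  unfolding cyclic_interval_def image_image
  by (rule image_cong) (simp_all add: mod_simps ac_simps)

lemma cyclic_interval_eq_interval:
  assumes "a + s \<le> m"
  shows "cyclic_interval m a s = {a..<a+s}"
proof -
  have "cyclic_interval m a s = (\<lambda>j. a + j) ` {..<s}"
    unfolding cyclic_interval_def by (rule image_cong) (use assms in auto)
  also have "\<dots> = {a..<a+s}"
    by (simp add: lessThan_atLeast0 add.commute)
  finally show ?thesis .
qed

lemma last_in_cyclic_interval: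
  assumes "a < m" "m \<le> a + s"
  shows "m - 1 \<in> cyclic_interval m a s"
proof -
  have "(a + (m - 1 - a)) mod m = m - 1" using assms(1) by simp
  moreover have "m - 1 - a < s" using assms by simp
  ultimately show ?thesis unfolding cyclic_interval_def by (metis image_eqI lessThan_iff)
qed

lemma finite_tight_cycle_edges: "finite (tight_cycle_edges s m)"
  unfolding tight_cycle_edges_def by (rule finite_image_set) simp

lemma card_tight_cycle_edges_ge:
  assumes "0 < s" "s \<le> m"
  shows "m - s + 1 \<le> card (tight_cycle_edges s m)"
proof -
  have intervals_sub: "(\<lambda>a. {a..<a+s}) ` {..m-s} \<subseteq> tight_cycle_edges s m"
  proof
    fix X assume "X \<in> (\<lambda>a. {a..<a+s}) ` {..m-s}"
    then obtain a where "a \<le> m - s" "X = {a..<a+s}" by auto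
    then have "X = cyclic_interval m a s" "a < m"
      using assms by (simp_all add: cyclic_interval_eq_interval)
    then show "X \<in> tight_cycle_edges s m" unfolding tight_cycle_edges_eq by blast
  qed
  have "inj_on (\<lambda>a. {a..<a+s}) {..m-s}"
  proof (rule inj_onI)
    fix a b assume same: "{a..<a+s} = {b..<b+s}"
    have "a \<in> {b..<b+s}" using \<open>0 < s\<close> unfolding same[symmetric] by simp
    moreover have "b \<in> {a..<a+s}" using \<open>0 < s\<close> unfolding same by simp
    ultimately show "a = b" by simp
  qed
  then have "m - s + 1 = card ((\<lambda>a. {a..<a+s}) ` {..m-s})" by (simp add: card_image)
  also have "\<dots> \<le> card (tight_cycle_edges s m)"
    using finite_tight_cycle_edges intervals_sub by (rule card_mono)
  finally show ?thesis .
qed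

lemma card_edges_avoiding_vertex_le:
  assumes "x < m" "x \<notin> V'" "V' \<subseteq> {..<m}" "0 < s"
    and "E' \<subseteq> tight_cycle_edges s m" "E' \<noteq> {}" "\<forall>e\<in>E'. e \<subseteq> V'"
  shows "card E' + s \<le> card V' + 1"
proof -
  define \<rho> where "\<rho> = (\<lambda>v. (v + (m - 1 - x)) mod m)"
  have inj: "inj_on \<rho> {..<m}" unfolding \<rho>_def by (rule inj_on_add_mod)
  have "\<rho> x = m - 1" using \<open>x < m\<close> by (simp add: \<rho>_def)
  define W where "W = \<rho> ` V'"
  define S where "S = {a. {a..<a+s} \<subseteq> W}"
  have edge_image: "\<exists>a\<in>S. \<rho> ` e = {a..<a+s}" if "e \<in> E'" for e
  proof -
    obtain i where "i < m" and e: "e = cyclic_interval m i s"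
      using assms(5) \<open>e \<in> E'\<close> unfolding tight_cycle_edges_eq by auto
    define a where "a = (i + (m - 1 - x)) mod m"
    have image: "\<rho> ` e = cyclic_interval m a s"
      unfolding \<rho>_def a_def e by (rule image_add_mod_cyclic_interval)
    have "e \<subseteq> V'" using \<open>e \<in> E'\<close> assms(7) by blast
    then have "\<rho> ` e \<subseteq> W" unfolding W_def by blast
    have "m - 1 \<notin> \<rho> ` e"
    proof
      assume "m - 1 \<in> \<rho> ` e"
      then obtain y where "y \<in> e" "\<rho> y = \<rho> x" using \<open>\<rho> x = m - 1\<close> by auto
      moreover have "y < m" using \<open>y \<in> e\<close> \<open>e \<subseteq> V'\<close> assms(3) by auto
      ultimately have "y = x" using inj \<open>x < m\<close> by (auto dest: inj_onD)
      then show False using \<open>y \<in> e\<close> \<open>e \<subseteq> V'\<close> \<open>x \<notin> V'\<close> by blast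
    qed
    moreover have "a < m" using \<open>i < m\<close> unfolding a_def by simp
    ultimately have "a + s \<le> m"
      using image last_in_cyclic_interval[of a m s] by (cases "m \<le> a + s") auto
    then have "\<rho> ` e = {a..<a+s}" using image by (simp add: cyclic_interval_eq_interval)
    with \<open>\<rho> ` e \<subseteq> W\<close> show ?thesis unfolding S_def by auto
  qed
  have "finite W" using assms(3) finite_subset unfolding W_def by blast
  moreover have "S \<subseteq> W" using \<open>0 < s\<close> unfolding S_def by auto
  ultimately have "finite S" using finite_subset by blast
  have "\<Union>E' \<subseteq> {..<m}" using assms(3,7) by blast
  then have "inj_on (image \<rho>) E'" using inj by (meson inj_on_image inj_on_subset)
  then have "card E' = card (image \<rho> ` E')" by (rule card_image[symmetric])
  also have "\<dots> \<le> card ((\<lambda>a. {a..<a+s}) ` S)"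
    using edge_image \<open>finite S\<close> by (intro card_mono) (auto simp: image_iff)
  also have "\<dots> \<le> card S" using \<open>finite S\<close> by (rule card_image_le)
  finally have "card E' \<le> card S" .
  moreover have "S \<noteq> {}" using edge_image assms(6) by blast
  then have "card S + s \<le> card W + 1"
    using card_intervals_within_le[OF \<open>finite W\<close> \<open>0 < s\<close>] unfolding S_def by blast
  moreover have "card W = card V'"
    unfolding W_def using inj assms(3) by (meson card_image inj_on_subset)
  ultimately show ?thesis by simp
qed

lemma g_density_le_one:
  assumes "0 < s" "0 < card E" "card E + s \<le> card V + 1"
  shows "g_density s V E \<le> 1"
proof (cases "card E = 1")
  case True
  then show ?thesis using \<open>0 < s\<close> by (simp add: g_density_def)
next
  case False
  then have "0 < real (card E) - 1" "real (card E) - 1 \<le> real (card V) - real s"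
    using assms by linarith+
  then show ?thesis using False by (simp add: g_density_def)
qed

lemma g_density_mono_card:
  assumes "card E' \<le> card E" "card E' \<noteq> 1" "card E \<noteq> 1" "s \<le> card V"
  shows "g_density s V E' \<le> g_density s V E"
  using assms by (simp add: g_density_def divide_right_mono)

lemma one_le_g_density_tight_cycle:
  assumes "0 < s" "s < m"
  shows "1 \<le> g_density s (tight_cycle_vertices m) (tight_cycle_edges s m)"
proof -
  have "m - s + 1 \<le> card (tight_cycle_edges s m)"
    using assms by (intro card_tight_cycle_edges_ge) simp_all
  then have "card (tight_cycle_edges s m) \<noteq> 1"
    and "real m - real s \<le> real (card (tight_cycle_edges s m)) - 1"
    using assms by linarith+
  then show ?thesis
    using \<open>s < m\<close> by (simp add: g_density_def tight_cycle_vertices_def)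
qed

lemma g_density_missing_vertex_le_one:
  assumes "0 < s" "sub_hypergraph V' E' (tight_cycle_vertices m) (tight_cycle_edges s m)"
    and "0 < card E'" "V' \<noteq> tight_cycle_vertices m"
  shows "g_density s V' E' \<le> 1"
proof -
  have "V' \<subseteq> {..<m}" "E' \<subseteq> tight_cycle_edges s m" "\<forall>e\<in>E'. e \<subseteq> V'"
    using assms(2) unfolding sub_hypergraph_def tight_cycle_vertices_def by auto
  moreover obtain x where "x < m" "x \<notin> V'"
    using \<open>V' \<subseteq> {..<m}\<close> assms(4) unfolding tight_cycle_vertices_def by blast
  moreover have "E' \<noteq> {}" using \<open>0 < card E'\<close> by auto
  ultimately have "card E' + s \<le> card V' + 1"
    using card_edges_avoiding_vertex_le \<open>0 < s\<close> by blast
  then show ?thesis by (rule g_density_le_one[OF \<open>0 < s\<close> \<open>0 < card E'\<close>])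
qed

theorem claim21:
  fixes s m :: nat
  assumes "s \<ge> 2" and "m \<ge> s + 1"
  shows "edge_balanced s (tight_cycle_vertices m) (tight_cycle_edges s m)"
  unfolding edge_balanced_def
proof (intro allI impI, elim conjE)
  let ?V = "tight_cycle_vertices m" and ?E = "tight_cycle_edges s m"
  fix V' E' assume sub: "sub_hypergraph V' E' ?V ?E" and "0 < card E'"
  have "0 < s" "s < m" using assms by simp_all
  show "g_density s V' E' \<le> g_density s ?V ?E"
  proof (cases "V' = ?V \<and> card E' \<noteq> 1")
    case True
    have "card E' \<le> card ?E"
      using finite_tight_cycle_edges sub by (intro card_mono) (auto simp: sub_hypergraph_def)
    moreover have "card ?E \<noteq> 1"
      using card_tight_cycle_edges_ge[of s m] \<open>0 < s\<close> \<open>s < m\<close> by simp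
    ultimately show ?thesis
      using True \<open>s < m\<close> by (simp add: g_density_mono_card tight_cycle_vertices_def)
  next
    case False
    then have "g_density s V' E' \<le> 1"
      using g_density_missing_vertex_le_one[OF \<open>0 < s\<close> sub \<open>0 < card E'\<close>] \<open>0 < s\<close>
      by (cases "card E' = 1") (auto simp: g_density_def)
    moreover have "1 \<le> g_density s ?V ?E"
      using \<open>0 < s\<close> \<open>s < m\<close> by (rule one_le_g_density_tight_cycle)
    ultimately show ?thesis by linarith
  qed
qed

end
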